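(* In the cone setting of the context, for each $\ell\in\mathcal C'_{\mathbb C}$ we have $\|\ell\|'\le\sqrt2\,|\ell(e)|$, where $\|\ell\|'=\sup_{\|h\|\le1}|\ell(h)|$ is the dual norm on $\mathcal B'_{\mathbb C}$.
   Context: Cone setting. $V$ is a real topological vector space, $\mathcal S\subset V'$ a set of linear functionals such that $\ell(x)=0$ for all $\ell\in\mathcal S$ implies $x=0$, $C_{\mathbb R}=\{h\in V\setminus\{0\}:\ell(h)\ge0\ \forall\ell\in\mathcal S\}$, and $e\in C_{\mathbb R}$ is such that for every $h\in V$ some $\lambda\ge0$ has $\lambda e-h\in C_{\mathbb R}$. Norm $\|h\|=\inf\{\lambda\ge0:\ell(\lambda e\pm h)\ge0\ \forall\ell\in\mathcal S\}$; $\mathcal B_{\mathbb R}$ the completion of $V$; $\mathcal C_{\mathbb R}=\{h\in\mathcal B_{\mathbb R}\setminus\{0\}:\ell(h)\ge0\ \forall\ell\in\mathcal S\}$. $\mathcal S_*$ is the weak-$*$ closure of the convex hull of $\{\lambda\ell:\lambda>0,\ell\in\mathcal S\}$, and there exist $m\in\mathcal S_*$, $\kappa\in(0,1)$ with $m(e)=1$ and $m(h)\ge\kappa\|h\|$ on $\mathcal C_{\mathbb R}$. $\mathcal B_{\mathbb C}$ is the complexification of $\mathcal B_{\mathbb R}$ (elements $x+iy$, norm $\sup_\theta(\|\Re(e^{i\theta}(x+iy))\|^2+\|\Im(e^{i\theta}(x+iy))\|^2)^{1/2}$), real functionals extended complex-linearly. $\mathcal C_{\mathbb C}=\{z(x+iy):z\in\mathbb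 C\setminus\{0\},x,y\in\mathcal C_{\mathbb R}\}$ and $\mathcal C'_{\mathbb C}=\{\ell\in\mathcal B'_{\mathbb C}:\ell(h)\ne0\ \forall h\in\mathcal C_{\mathbb C}\}$. *)

theory Defs
  imports "HOL-Analysis.Analysis"
begin

definition tvs :: "'v::{real_vector,topological_space} itself \<Rightarrow> bool" where
  "tvs _ \<longleftrightarrow> continuous_on UNIV (\<lambda>(x::'v, y::'v). x + y) \<and>
              continuous_on UNIV (\<lambda>(c::real, x::'v). c *\<^sub>R x)"

definition top_dual :: "('v::{real_vector,topological_space} \<Rightarrow> real) set" where
  "top_dual = {l. linear l \<and> continuous_on UNIV l}"

definition pos_cone :: "('a \<Rightarrow> real) set \<Rightarrow> 'a::zero set" where
  "pos_cone L = {h. h \<noteq> 0 \<and> (\<forall>l\<in>L. l h \<ge> 0)}"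

definition cone_norm :: "('v::real_vector \<Rightarrow> real) set \<Rightarrow> 'v \<Rightarrow> 'v \<Rightarrow> real" where
  "cone_norm S e h = Inf {t. t \<ge> 0 \<and>
      (\<forall>l\<in>S. l (t *\<^sub>R e + h) \<ge> 0 \<and> l (t *\<^sub>R e - h) \<ge> 0)}"

definition conv_fun :: "('v \<Rightarrow> real) set \<Rightarrow> ('v \<Rightarrow> real) set" where
  "conv_fun P = {g. \<exists>(n::nat) c f. n > 0 \<and> (\<forall>i<n. c i \<ge> (0::real) \<and> f i \<in> P) \<and>
      (\<Sum>i<n. c i) = 1 \<and> g = (\<lambda>x. \<Sum>i<n. c i * f i x)}"

definition weak_star_closure ::
    "('v::{real_vector,topological_space} \<Rightarrow> real) set \<Rightarrow> ('v \<Rightarrow> real) set" where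
  "weak_star_closure A = {m. m \<in> top_dual \<and>
      (\<forall>F \<epsilon>. finite F \<and> \<epsilon> > 0 \<longrightarrow> (\<exists>g\<in>A. \<forall>x\<in>F. \<bar>m x - g x\<bar> < \<epsilon>))}"

definition S_star :: "('v::{real_vector,topological_space} \<Rightarrow> real) set \<Rightarrow> ('v \<Rightarrow> real) set" where
  "S_star S = weak_star_closure (conv_fun {(\<lambda>x. t * l x) | t l. t > 0 \<and> l \<in> S})"

text \<open>Complexification B_C of B_R, realised as pairs (x,y) standing for x + iy.\<close>
definition cmul :: "complex \<Rightarrow> 'b::real_vector \<times> 'b \<Rightarrow> 'b \<times> 'b" where
  "cmul z h = (Re z *\<^sub>R fst h - Im z *\<^sub>R snd h, Re z *\<^sub>R snd h + Im z *\<^sub>R fst h)"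

definition cnorm :: "'b::real_normed_vector \<times> 'b \<Rightarrow> real" where
  "cnorm h = (SUP \<theta>\<in>(UNIV::real set).
      sqrt ((norm (cos \<theta> *\<^sub>R fst h - sin \<theta> *\<^sub>R snd h))\<^sup>2 +
            (norm (sin \<theta> *\<^sub>R fst h + cos \<theta> *\<^sub>R snd h))\<^sup>2))"

definition cdual :: "('b::real_normed_vector \<times> 'b \<Rightarrow> complex) set" where
  "cdual = {l. (\<forall>h k. l (h + k) = l h + l k) \<and> (\<forall>z h. l (cmul z h) = z * l h) \<and>
              (\<exists>K. \<forall>h. cmod (l h) \<le> K * cnorm h)}"

definition dual_norm :: "('b::real_normed_vector \<times> 'b \<Rightarrow> complex) \<Rightarrow> real" where
  "dual_norm l = Sup {cmod (l h) | h. cnorm h \<le> 1}"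

definition complex_cone :: "'b::real_vector set \<Rightarrow> ('b \<times> 'b) set" where
  "complex_cone C = {cmul z (x, y) | z x y. z \<noteq> 0 \<and> x \<in> C \<and> y \<in> C}"

definition cone_dual :: "'b::real_normed_vector set \<Rightarrow> ('b \<times> 'b \<Rightarrow> complex) set" where
  "cone_dual C = {l\<in>cdual. \<forall>h\<in>complex_cone C. l h \<noteq> 0}"

end

theory Submission
  imports Defs
begin

text \<open>Write \<open>L x = \<ell>(x + i0)\<close>, so that \<open>\<ell>(x + iy) = L x + i L y\<close>. The image \<open>K = L(C)\<close> of the real
  cone is a convex cone in \<open>\<complex>\<close> with \<open>K \<inter> iK = \<emptyset>\<close>, which forces any two of its points to make an
  angle of at most \<open>\<pi>/2\<close>. Whenever \<open>t e \<plusminus> h\<close> both lie in the closed cone (in particular for every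
  \<open>t > \<parallel>h\<parallel>\<close>), \<open>L(te + h)\<close> and \<open>L(te - h)\<close> make such an angle, which by the parallelogram
  identity means \<open>|L h| \<le> t |L e|\<close>. Density extends \<open>|L x| \<le> \<parallel>x\<parallel> |L e|\<close> to all of \<open>\<B>\<^sub>\<real>\<close>, and
  \<open>|\<ell>(x + iy)| \<le> (\<parallel>x\<parallel> + \<parallel>y\<parallel>) |L e| \<le> \<surd>2 \<parallel>x + iy\<parallel> |L e|\<close>.\<close>

lemma Re_mult_cnj_nonneg_if_cone:
  fixes K :: "complex set"
  assumes add: "\<And>x y. x \<in> K \<Longrightarrow> y \<in> K \<Longrightarrow> x + y \<in> K"
    and scale: "\<And>c x. 0 < c \<Longrightarrow> x \<in> K \<Longrightarrow> c *\<^sub>R x \<in> K"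
    and no_quarter_turn: "\<And>x y. x \<in> K \<Longrightarrow> y \<in> K \<Longrightarrow> x + \<i> * y \<noteq> 0"
    and a: "a \<in> K" and b: "b \<in> K"
  shows "0 \<le> Re (a * cnj b)"
proof (rule ccontr)
  assume neg: "\<not> 0 \<le> Re (a * cnj b)"
  have "b \<noteq> 0" using no_quarter_turn[OF b b] by auto
  define w where "w = a / b"
  have a_eq: "a = w * b" using \<open>b \<noteq> 0\<close> by (simp add: w_def)
  have "Re (a * cnj b) = Re w * (cmod b)\<^sup>2"
    by (simp add: a_eq mult.assoc complex_mult_cnj cmod_power2)
  then have "Re w < 0" using neg by (metis mult_nonneg_nonneg not_le zero_le_power2)
  define \<alpha> where "\<alpha> = - Re w"
  have "0 < \<alpha>" using \<open>Re w < 0\<close> by (simp add: \<alpha>_def)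
  have aK: "a + \<alpha> *\<^sub>R b \<in> K" using add[OF a scale[OF \<open>0 < \<alpha>\<close> b]] .
  have a_shift: "a + \<alpha> *\<^sub>R b = \<i> * Im w * b"
    by (simp add: a_eq \<alpha>_def scaleR_conv_of_real algebra_simps complex_eq_iff)
  consider "Im w = 0" | "Im w < 0" | "0 < Im w" by linarith
  then show False
  proof cases
    case 1
    then show False using no_quarter_turn[OF aK aK] a_shift by simp
  next
    case 2
    have "(- Im w) *\<^sub>R b \<in> K" using scale[OF _ b] 2 by (simp del: scaleR_minus_left)
    moreover have "(a + \<alpha> *\<^sub>R b) + \<i> * ((- Im w) *\<^sub>R b) = 0"
      unfolding a_shift by (simp add: scaleR_conv_of_real)
    ultimately show False using no_quarter_turn[OF aK] by blast
  next
    case 3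
    define z where "z = - inverse w"
    have "w \<noteq> 0" using \<open>Re w < 0\<close> by auto
    have "0 < Re z" "0 < Im z"
      using \<open>Re w < 0\<close> 3 by (simp_all add: z_def divide_neg_pos add_pos_pos)
    then have "Re z *\<^sub>R a + b \<in> K" "Im z *\<^sub>R a \<in> K" using add scale a b by blast+
    moreover have "(Re z *\<^sub>R a + b) + \<i> * (Im z *\<^sub>R a) = (z * w + 1) * b"
      by (simp add: a_eq scaleR_conv_of_real algebra_simps complex_eq_iff)
    moreover have "z * w + 1 = 0" using \<open>w \<noteq> 0\<close> by (simp add: z_def)
    ultimately show False using no_quarter_turn by fastforce
  qed
qed

lemma cmod_le_if_Re_mult_cnj_nonneg:
  fixes a x :: complex
  assumes "0 \<le> Re ((a + x) * cnj (a - x))"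
  shows "cmod x \<le> cmod a"
proof -
  have "Re ((a + x) * cnj (a - x)) = (cmod a)\<^sup>2 - (cmod x)\<^sup>2"
    by (simp add: cmod_power2 algebra_simps) (simp add: power2_eq_square)
  then have "(cmod x)\<^sup>2 \<le> (cmod a)\<^sup>2" using assms by linarith
  then show ?thesis by (rule power2_le_imp_le) simp
qed

lemma pos_cone_scaleR:
  fixes L :: "('v::real_vector \<Rightarrow> real) set"
  assumes "\<And>l. l \<in> L \<Longrightarrow> linear l" and "0 < c" and "x \<in> pos_cone L"
  shows "c *\<^sub>R x \<in> pos_cone L"
  using assms by (auto simp: pos_cone_def linear_scale)

lemma pos_cone_add:
  fixes L :: "('v::real_vector \<Rightarrow> real) set" and m :: "'v \<Rightarrow> real"
  assumes "\<And>l. l \<in> L \<Longrightarrow> linear l" and "linear m"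
    and m_pos: "\<And>h. h \<in> pos_cone L \<Longrightarrow> 0 < m h"
    and x: "x \<in> pos_cone L" and y: "y \<in> pos_cone L"
  shows "x + y \<in> pos_cone L"
proof -
  have "0 < m (x + y)" using m_pos[OF x] m_pos[OF y] linear_add[OF \<open>linear m\<close>, of x y] by linarith
  then have "x + y \<noteq> 0" using linear_0[OF \<open>linear m\<close>] by auto
  moreover have "0 \<le> l (x + y)" if "l \<in> L" for l
    using x y that assms(1)[OF that] by (simp add: pos_cone_def linear_add)
  ultimately show ?thesis by (simp add: pos_cone_def)
qed

lemma cdual_pair:
  assumes "l \<in> cdual"
  shows "l (x, y) = l (x, 0) + \<i> * l (y, 0)"
proof -
  from assms have add: "\<And>h k. l (h + k) = l h + l k" and mul: "\<And>z h. l (cmul z h) = z * l h"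
    by (auto simp: cdual_def)
  have "l (x, y) = l ((x, 0) + cmul \<i> (y, 0))" by (simp add: cmul_def)
  also have "\<dots> = l (x, 0) + \<i> * l (y, 0)" by (simp only: add mul)
  finally show ?thesis .
qed

lemma cnorm_real: "cnorm (x, 0::'b::real_normed_vector) = norm x"
proof -
  have "(norm (cos \<theta> *\<^sub>R x))\<^sup>2 + (norm (sin \<theta> *\<^sub>R x))\<^sup>2 = (norm x)\<^sup>2" for \<theta> :: real
    by (simp add: power_mult_distrib flip: distrib_right)
  then show ?thesis by (simp add: cnorm_def del: norm_scaleR)
qed

lemma sqrt_norm_squares_le_cnorm:
  "sqrt ((norm x)\<^sup>2 + (norm y)\<^sup>2) \<le> cnorm (x, y::'b::real_normed_vector)"
proof -
  define f where "f \<theta> = sqrt ((norm (cos \<theta> *\<^sub>R x - sin \<theta> *\<^sub>R y))\<^sup>2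
    + (norm (sin \<theta> *\<^sub>R x + cos \<theta> *\<^sub>R y))\<^sup>2)" for \<theta>
  have "f \<theta> \<le> 2 * (norm x + norm y)" for \<theta>
  proof -
    have "f \<theta> \<le> norm (cos \<theta> *\<^sub>R x - sin \<theta> *\<^sub>R y) + norm (sin \<theta> *\<^sub>R x + cos \<theta> *\<^sub>R y)"
      unfolding f_def by (rule sqrt_sum_squares_le_sum) auto
    also have "\<dots> \<le> (norm (cos \<theta> *\<^sub>R x) + norm (sin \<theta> *\<^sub>R y))
        + (norm (sin \<theta> *\<^sub>R x) + norm (cos \<theta> *\<^sub>R y))"
      by (intro add_mono norm_triangle_ineq4 norm_triangle_ineq)
    also have "\<dots> \<le> (norm x + norm y) + (norm x + norm y)"
      by (intro add_mono) (auto intro!: mult_left_le_one_le)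
    finally show ?thesis by simp
  qed
  then have "f 0 \<le> (SUP \<theta>. f \<theta>)" by (intro cSUP_upper bdd_aboveI2) auto
  moreover have "cnorm (x, y) = (SUP \<theta>. f \<theta>)" by (simp add: cnorm_def f_def)
  ultimately show ?thesis by (simp add: f_def)
qed

lemma cdual_bounded_linear_real:
  assumes "l \<in> cdual"
  shows "bounded_linear (\<lambda>x. l (x, 0))"
proof -
  from assms have add: "\<And>h k. l (h + k) = l h + l k" and mul: "\<And>z h. l (cmul z h) = z * l h"
    and "\<exists>K. \<forall>h. cmod (l h) \<le> K * cnorm h" by (auto simp: cdual_def)
  then obtain K where K: "\<And>h. cmod (l h) \<le> K * cnorm h" by blast
  show ?thesis
  proof (rule bounded_linear_intro[where K = K])
    show "l (x + y, 0) = l (x, 0) + l (y, 0)" for x y using add[of "(x, 0)" "(y, 0)"] by simp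
    show "l (c *\<^sub>R x, 0) = c *\<^sub>R l (x, 0)" for c x
      using mul[of "of_real c" "(x, 0)"] by (simp add: cmul_def scaleR_conv_of_real)
    show "cmod (l (x, 0)) \<le> norm x * K" for x
      using K[of "(x, 0)"] by (simp add: cnorm_real mult.commute)
  qed
qed

lemma add_le_sqrt2_mult_sqrt_sum_squares:
  fixes x y :: real
  shows "x + y \<le> sqrt 2 * sqrt (x\<^sup>2 + y\<^sup>2)"
proof -
  have "(x + y)\<^sup>2 \<le> 2 * (x\<^sup>2 + y\<^sup>2)"
    using zero_le_power2[of "x - y"] by (simp add: power2_eq_square algebra_simps)
  then show ?thesis by (simp add: real_le_rsqrt flip: real_sqrt_mult)
qed

lemma dual_norm_le_sqrt2:
  assumes l: "l \<in> cdual" and "0 \<le> M" and bound: "\<And>x. cmod (l (x, 0)) \<le> M * norm x"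
  shows "dual_norm l \<le> sqrt 2 * M"
  unfolding dual_norm_def
proof (rule cSup_least)
  show "{cmod (l h) |h. cnorm h \<le> 1} \<noteq> {}"
    using cnorm_real[of "0::'a"] by (metis (mono_tags, lifting) empty_Collect_eq norm_zero zero_le_one)
  fix r assume "r \<in> {cmod (l h) |h. cnorm h \<le> 1}"
  then obtain x y where r: "r = cmod (l (x, y))" and unit: "cnorm (x, y) \<le> 1" by auto
  have "sqrt ((norm x)\<^sup>2 + (norm y)\<^sup>2) \<le> 1"
    using sqrt_norm_squares_le_cnorm[of x y] unit by linarith
  then have "sqrt 2 * sqrt ((norm x)\<^sup>2 + (norm y)\<^sup>2) \<le> sqrt 2" by (simp add: mult_left_le)
  then have xy: "norm x + norm y \<le> sqrt 2"
    using add_le_sqrt2_mult_sqrt_sum_squares[of "norm x" "norm y"] by linarith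
  have "r \<le> cmod (l (x, 0)) + cmod (l (y, 0))"
    using norm_triangle_ineq[of "l (x, 0)" "\<i> * l (y, 0)"] by (simp add: r cdual_pair[OF l, of x y] norm_mult)
  also have "\<dots> \<le> M * (norm x + norm y)" using bound[of x] bound[of y] by (simp add: distrib_left)
  also have "\<dots> \<le> M * sqrt 2" using xy \<open>0 \<le> M\<close> by (rule mult_left_mono)
  finally show "r \<le> sqrt 2 * M" by (simp add: mult.commute)
qed

lemma complex_cone_pair: "x \<in> C \<Longrightarrow> y \<in> C \<Longrightarrow> (x, y) \<in> complex_cone C"
  unfolding complex_cone_def by (rule CollectI, rule exI[of _ 1]) (auto simp: cmul_def)

lemma cone_dual_pair_nonzero:
  assumes "l \<in> cone_dual C" and "x \<in> C" and "y \<in> C"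
  shows "l (x, 0) + \<i> * l (y, 0) \<noteq> 0"
  using assms complex_cone_pair[of x C y] cdual_pair[of l x y] by (auto simp: cone_dual_def)

lemma cone_dual_Re_mult_cnj_nonneg:
  fixes l :: "'b::real_normed_vector \<times> 'b \<Rightarrow> complex"
  assumes l: "l \<in> cone_dual C"
    and add: "\<And>x y. x \<in> C \<Longrightarrow> y \<in> C \<Longrightarrow> x + y \<in> C"
    and scale: "\<And>c x. 0 < c \<Longrightarrow> x \<in> C \<Longrightarrow> c *\<^sub>R x \<in> C"
    and p: "p \<in> insert 0 C" and q: "q \<in> insert 0 C"
  shows "0 \<le> Re (l (p, 0) * cnj (l (q, 0)))"
proof -
  interpret L: bounded_linear "\<lambda>x. l (x, 0)"
    using l by (simp add: cone_dual_def cdual_bounded_linear_real)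
  let ?K = "(\<lambda>x. l (x, 0)) ` C"
  have "0 \<le> Re (a * cnj b)" if "a \<in> ?K" "b \<in> ?K" for a b
  proof (rule Re_mult_cnj_nonneg_if_cone[OF _ _ _ that])
    show "x + y \<in> ?K" if "x \<in> ?K" "y \<in> ?K" for x y
      using that add by (auto simp flip: L.add)
    show "c *\<^sub>R x \<in> ?K" if "0 < c" "x \<in> ?K" for c x
      using that scale by (auto simp flip: L.scaleR)
    show "x + \<i> * y \<noteq> 0" if "x \<in> ?K" "y \<in> ?K" for x y
      using that cone_dual_pair_nonzero[OF l] by auto
  qed
  then show ?thesis using p q L.zero by auto
qed

lemma cone_dual_le_of_order_interval:
  fixes l :: "'b::real_normed_vector \<times> 'b \<Rightarrow> complex"
  assumes l: "l \<in> cone_dual C"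
    and add: "\<And>x y. x \<in> C \<Longrightarrow> y \<in> C \<Longrightarrow> x + y \<in> C"
    and scale: "\<And>c x. 0 < c \<Longrightarrow> x \<in> C \<Longrightarrow> c *\<^sub>R x \<in> C"
    and "u + x \<in> insert 0 C" and "u - x \<in> insert 0 C"
  shows "cmod (l (x, 0)) \<le> cmod (l (u, 0))"
proof (rule cmod_le_if_Re_mult_cnj_nonneg)
  interpret L: bounded_linear "\<lambda>x. l (x, 0)"
    using l by (simp add: cone_dual_def cdual_bounded_linear_real)
  show "0 \<le> Re ((l (u, 0) + l (x, 0)) * cnj (l (u, 0) - l (x, 0)))"
    using cone_dual_Re_mult_cnj_nonneg[OF l add scale assms(4,5)] by (simp add: L.add L.diff)
qed

lemma le_cone_norm:
  fixes S :: "('v::real_vector \<Rightarrow> real) set"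
  assumes "\<exists>t\<ge>0. \<forall>\<phi>\<in>S. 0 \<le> \<phi> (t *\<^sub>R e + h) \<and> 0 \<le> \<phi> (t *\<^sub>R e - h)"
    and "\<And>t. 0 \<le> t \<Longrightarrow> \<forall>\<phi>\<in>S. 0 \<le> \<phi> (t *\<^sub>R e + h) \<and> 0 \<le> \<phi> (t *\<^sub>R e - h) \<Longrightarrow> c \<le> t"
  shows "c \<le> cone_norm S e h"
  unfolding cone_norm_def using assms by (intro cInf_greatest) auto

lemma order_unit_dominates:
  fixes S :: "('v::{real_vector,topological_space} \<Rightarrow> real) set"
  assumes S: "S \<subseteq> top_dual" and e: "e \<in> pos_cone S"
    and unit: "\<And>h. \<exists>t\<ge>0. t *\<^sub>R e - h \<in> pos_cone S"
  shows "\<exists>t\<ge>0. \<forall>\<phi>\<in>S. 0 \<le> \<phi> (t *\<^sub>R e + h) \<and> 0 \<le> \<phi> (t *\<^sub>R e - h)"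
proof -
  obtain s where s: "0 \<le> s" "s *\<^sub>R e - h \<in> pos_cone S" using unit by blast
  obtain t where t: "0 \<le> t" "t *\<^sub>R e - (- h) \<in> pos_cone S" using unit by blast
  have "0 \<le> \<phi> ((s + t) *\<^sub>R e + h) \<and> 0 \<le> \<phi> ((s + t) *\<^sub>R e - h)" if "\<phi> \<in> S" for \<phi>
  proof -
    have "linear \<phi>" using S that by (auto simp: top_dual_def)
    moreover have "0 \<le> \<phi> e" "0 \<le> \<phi> (s *\<^sub>R e - h)" "0 \<le> \<phi> (t *\<^sub>R e + h)"
      using e s t that by (auto simp: pos_cone_def)
    moreover have "0 \<le> s * \<phi> e" "0 \<le> t * \<phi> e" using s t \<open>0 \<le> \<phi> e\<close> by simp_all
    ultimately show ?thesis by (simp add: linear_add linear_diff linear_scale algebra_simps)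
  qed
  then show ?thesis using s t by (intro exI[of _ "s + t"]) auto
qed

lemma cone_dual_le_cone_norm:
  fixes S :: "('v::real_vector \<Rightarrow> real) set" and j :: "'v \<Rightarrow> 'b::real_normed_vector"
  assumes l: "l \<in> cone_dual C"
    and add: "\<And>x y. x \<in> C \<Longrightarrow> y \<in> C \<Longrightarrow> x + y \<in> C"
    and scale: "\<And>c x. 0 < c \<Longrightarrow> x \<in> C \<Longrightarrow> c *\<^sub>R x \<in> C"
    and "linear j"
    and j_pos: "\<And>w. \<forall>\<phi>\<in>S. 0 \<le> \<phi> w \<Longrightarrow> j w \<in> insert 0 C"
    and dominated: "\<exists>t\<ge>0. \<forall>\<phi>\<in>S. 0 \<le> \<phi> (t *\<^sub>R e + h) \<and> 0 \<le> \<phi> (t *\<^sub>R e - h)"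
    and "l (j e, 0) \<noteq> 0"
  shows "cmod (l (j h, 0)) \<le> cone_norm S e h * cmod (l (j e, 0))"
proof -
  interpret L: bounded_linear "\<lambda>x. l (x, 0)"
    using l by (simp add: cone_dual_def cdual_bounded_linear_real)
  have "cmod (l (j h, 0)) / cmod (l (j e, 0)) \<le> cone_norm S e h"
  proof (rule le_cone_norm[OF dominated])
    fix t :: real
    assume "0 \<le> t" and "\<forall>\<phi>\<in>S. 0 \<le> \<phi> (t *\<^sub>R e + h) \<and> 0 \<le> \<phi> (t *\<^sub>R e - h)"
    then have "j (t *\<^sub>R e + h) \<in> insert 0 C" "j (t *\<^sub>R e - h) \<in> insert 0 C"
      using j_pos by auto
    then have "cmod (l (j h, 0)) \<le> cmod (l (t *\<^sub>R j e, 0))"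
      using \<open>linear j\<close> by (intro cone_dual_le_of_order_interval[OF l add scale])
        (simp_all add: linear_add linear_diff linear_scale)
    also have "\<dots> = t * cmod (l (j e, 0))" using \<open>0 \<le> t\<close> by (simp add: L.scaleR)
    finally show "cmod (l (j h, 0)) / cmod (l (j e, 0)) \<le> t"
      using \<open>l (j e, 0) \<noteq> 0\<close> by (simp add: divide_le_eq)
  qed
  then show ?thesis using \<open>l (j e, 0) \<noteq> 0\<close> by (simp add: divide_le_eq)
qed

lemma norm_bound_from_dense_range:
  fixes f :: "'a::real_normed_vector \<Rightarrow> 'c::real_normed_vector"
  assumes f: "continuous_on UNIV f" and dense: "closure (range j) = UNIV"
    and bound: "\<And>v. norm (f (j v)) \<le> M * norm (j v)"
  shows "norm (f x) \<le> M * norm x"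
proof -
  have "closed {x. norm (f x) \<le> M * norm x}"
    by (intro closed_Collect_le continuous_on_norm continuous_on_mult continuous_on_const
        continuous_on_id f)
  moreover have "range j \<subseteq> {x. norm (f x) \<le> M * norm x}" using bound by auto
  ultimately have "closure (range j) \<subseteq> {x. norm (f x) \<le> M * norm x}" by (rule closure_minimal[rotated])
  then show ?thesis using dense by auto
qed

theorem lemma5p5:
  fixes S :: "('v::{real_vector,topological_space} \<Rightarrow> real) set"
    and e :: 'v
    and j :: "'v \<Rightarrow> 'b::banach"
    and ext :: "('v \<Rightarrow> real) \<Rightarrow> 'b \<Rightarrow> real"
    and m :: "'v \<Rightarrow> real" and mB :: "'b \<Rightarrow> real"
    and \<kappa> :: real
    and l :: "'b \<times> 'b \<Rightarrow> complex"
  assumes V_tvs: "tvs TYPE('v)"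
    and S_dual: "S \<subseteq> top_dual"
    and S_sep: "\<And>x. (\<forall>l\<in>S. l x = 0) \<Longrightarrow> x = 0"
    and e_cone: "e \<in> pos_cone S"
    and e_unit: "\<And>h. \<exists>t\<ge>0. t *\<^sub>R e - h \<in> pos_cone S"
    and j_lin: "linear j"
    and j_isom: "\<And>h. norm (j h) = cone_norm S e h"
    and j_dense: "closure (range j) = UNIV"
    and ext_lin: "\<And>l. l \<in> S \<Longrightarrow> bounded_linear (ext l)"
    and ext_j: "\<And>l x. l \<in> S \<Longrightarrow> ext l (j x) = l x"
    and m_S: "m \<in> S_star S"
    and mB_lin: "bounded_linear mB"
    and mB_j: "\<And>x. mB (j x) = m x"
    and \<kappa>_pos: "0 < \<kappa>" and \<kappa>_lt: "\<kappa> < 1"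
    and m_e: "m e = 1"
    and m_cone: "\<And>h. h \<in> pos_cone (ext ` S) \<Longrightarrow> mB h \<ge> \<kappa> * norm h"
    and l_dual: "l \<in> cone_dual (pos_cone (ext ` S))"
  shows "dual_norm l \<le> sqrt 2 * cmod (l (j e, 0))"
proof -
  let ?C = "pos_cone (ext ` S)"
  have ext_linear: "\<And>\<phi>. \<phi> \<in> ext ` S \<Longrightarrow> linear \<phi>"
    using ext_lin bounded_linear.linear by blast
  have mB_pos: "0 < mB h" if "h \<in> ?C" for h
  proof -
    have "0 < \<kappa> * norm h" using that \<kappa>_pos by (simp add: pos_cone_def)
    then show ?thesis using m_cone[OF that] by linarith
  qed
  note add = pos_cone_add[OF ext_linear bounded_linear.linear[OF mB_lin] mB_pos]
  note scale = pos_cone_scaleR[OF ext_linear]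
  have j_pos: "j w \<in> insert 0 ?C" if "\<forall>\<phi>\<in>S. 0 \<le> \<phi> w" for w
    using that ext_j by (auto simp: pos_cone_def)
  have "j e \<noteq> 0" using mB_j[of e] m_e linear_0[OF bounded_linear.linear[OF mB_lin]] by auto
  then have "j e \<in> ?C" using j_pos[of e] e_cone by (auto simp: pos_cone_def)
  then have "l (j e, 0) \<noteq> 0" using cone_dual_pair_nonzero[OF l_dual] by fastforce
  have "cmod (l (j v, 0)) \<le> cmod (l (j e, 0)) * norm (j v)" for v
    using cone_dual_le_cone_norm[OF l_dual add scale j_lin j_pos
        order_unit_dominates[OF S_dual e_cone e_unit] \<open>l (j e, 0) \<noteq> 0\<close>]
    by (simp add: j_isom mult.commute)
  moreover have "continuous_on UNIV (\<lambda>x. l (x, 0))"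
    using l_dual by (simp add: cone_dual_def cdual_bounded_linear_real linear_continuous_on)
  ultimately have "cmod (l (x, 0)) \<le> cmod (l (j e, 0)) * norm x" for x
    using norm_bound_from_dense_range[OF _ j_dense] by blast
  then show ?thesis using l_dual by (intro dual_norm_le_sqrt2) (auto simp: cone_dual_def)
qed

end
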